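(* For any instance of the $k$-Densest Subgraph problem on a graph with $n$ vertices, the DLA of QWOA satisfies $\dim(\mathfrak g_{\mathrm{QWOA},k\text{-Densest-Subgraph}})=\mathcal O(n^4)$.
   Context: $k$-Densest Subgraph on an undirected simple graph $G=(V,E)$, $V=\{1,\dots,n\}$, $1<k<n$: feasible solutions $\mathcal S'$ are the $z\in\{0,1\}^n$ of Hamming weight $k$, with cost $C(z)$ the number of edges with both endpoints selected; $N=|\mathcal S'|=\binom nk$. On $\mathbb C^{N}$ with basis $\{|z\rangle:z\in\mathcal S'\}$ (the indexed feasible subspace), $H_C$ is diagonal with $H_C|z\rangle=C(z)|z\rangle$ and $H_M$ is the $N\times N$ all-ones matrix (equivalent up to identity to the complete-graph adjacency matrix). $\mathfrak g_{\mathrm{QWOA},k\text{-Densest-Subgraph}}$ is the real Lie algebra generated by $iH_C$ and $iH_M$ (smallest real subspace containing them and closed under commutators); its dimension is its real dimension. *)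

theory Defs
  imports "HOL-Analysis.Analysis" "HOL-Library.Function_Algebras"
begin

definition simple_graph :: "nat \<Rightarrow> nat set set \<Rightarrow> bool" where
  "simple_graph n E \<longleftrightarrow> (\<forall>e\<in>E. e \<subseteq> {1..n} \<and> card e = 2)"

text \<open>Feasible solutions: Hamming-weight-k bitstrings, identified with k-subsets of {1..n}.\<close>
definition feasible :: "nat \<Rightarrow> nat \<Rightarrow> nat set set" where
  "feasible n k = {z. z \<subseteq> {1..n} \<and> card z = k}"

definition kds_cost :: "nat set set \<Rightarrow> nat set \<Rightarrow> nat" where
  "kds_cost E z = card {e\<in>E. e \<subseteq> z}"

text \<open>Operators on C^N with basis indexed by the feasible set, as matrices
  (functions of row/column index, zero outside the feasible set).\<close>
type_synonym cmat = "nat set \<Rightarrow> nat set \<Rightarrow> complex"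

definition H_C :: "nat \<Rightarrow> nat \<Rightarrow> nat set set \<Rightarrow> cmat" where
  "H_C n k E = (\<lambda>z w. if z \<in> feasible n k \<and> w = z then of_nat (kds_cost E z) else 0)"

definition H_M :: "nat \<Rightarrow> nat \<Rightarrow> cmat" where
  "H_M n k = (\<lambda>z w. if z \<in> feasible n k \<and> w \<in> feasible n k then 1 else 0)"

definition mmult :: "nat set set \<Rightarrow> cmat \<Rightarrow> cmat \<Rightarrow> cmat" where
  "mmult F A B = (\<lambda>z w. \<Sum>y\<in>F. A z y * B y w)"

definition commutator :: "nat set set \<Rightarrow> cmat \<Rightarrow> cmat \<Rightarrow> cmat" where
  "commutator F A B = mmult F A B - mmult F B A"

definition rscale :: "real \<Rightarrow> cmat \<Rightarrow> cmat" where
  "rscale r A = (\<lambda>z w. complex_of_real r * A z w)"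

inductive_set lie_closure :: "nat set set \<Rightarrow> cmat set \<Rightarrow> cmat set"
  for F :: "nat set set" and G :: "cmat set" where
  gen: "A \<in> G \<Longrightarrow> A \<in> lie_closure F G"
| zero: "0 \<in> lie_closure F G"
| add: "A \<in> lie_closure F G \<Longrightarrow> B \<in> lie_closure F G \<Longrightarrow> A + B \<in> lie_closure F G"
| scale: "A \<in> lie_closure F G \<Longrightarrow> rscale r A \<in> lie_closure F G"
| comm: "A \<in> lie_closure F G \<Longrightarrow> B \<in> lie_closure F G \<Longrightarrow> commutator F A B \<in> lie_closure F G"

definition qwoa_dla :: "nat \<Rightarrow> nat \<Rightarrow> nat set set \<Rightarrow> cmat set" where
  "qwoa_dla n k E = lie_closure (feasible n k)
     {(\<lambda>z w. \<i> * H_C n k E z w), (\<lambda>z w. \<i> * H_M n k z w)}"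

definition real_dim :: "cmat set \<Rightarrow> nat" where
  "real_dim S = vector_space.dim rscale S"

end

theory Submission
  imports Defs
begin

text \<open>Every element of the DLA has the form \<open>a \<cdot> diag(C) + M\<close> with \<open>M\<^sub>z\<^sub>w\<close> depending only on
  the pair of costs \<open>(C z, C w)\<close>. Both generators have this form, and so does the commutator
  of two such matrices: the diagonal parts are multiples of one diagonal matrix and commute,
  and every product involving a cost-block part again only sees costs. As costs lie in
  \<open>{0..n\<^sup>2}\<close>, these matrices span a real space of dimension at most \<open>2((n\<^sup>2+1)\<^sup>2+1) = O(n\<^sup>4)\<close>.\<close>

interpretation rspace: vector_space rscale
  by unfold_locales (auto simp: rscale_def fun_eq_iff algebra_simps)

lemma sum_cmat_apply: "(sum A S :: cmat) z w = (\<Sum>p\<in>S. A p z w)"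
  by (induct S rule: infinite_finite_induct) auto

definition label_matrix ::
  "nat set set \<Rightarrow> (nat set \<Rightarrow> 'l) \<Rightarrow> ('l \<Rightarrow> complex) \<Rightarrow> ('l \<Rightarrow> 'l \<Rightarrow> complex) \<Rightarrow> cmat" where
  "label_matrix F lab \<phi> f = (\<lambda>z w. (if z \<in> F \<and> w = z then \<phi> (lab z) else 0)
      + (if z \<in> F \<and> w \<in> F then f (lab z) (lab w) else 0))"

lemma mmult_label_matrix:
  assumes "finite F"
  shows "mmult F (label_matrix F lab \<phi> f) (label_matrix F lab \<psi> g) =
    label_matrix F lab (\<lambda>c. \<phi> c * \<psi> c)
      (\<lambda>c e. \<phi> c * g c e + f c e * \<psi> e + (\<Sum>y\<in>F. f c (lab y) * g (lab y) e))"
proof (intro ext)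
  fix z w
  show "mmult F (label_matrix F lab \<phi> f) (label_matrix F lab \<psi> g) z w =
    label_matrix F lab (\<lambda>c. \<phi> c * \<psi> c)
      (\<lambda>c e. \<phi> c * g c e + f c e * \<psi> e + (\<Sum>y\<in>F. f c (lab y) * g (lab y) e)) z w"
  proof (cases "z \<in> F")
    case False
    then show ?thesis by (simp add: mmult_def label_matrix_def)
  next
    case True
    have entry: "label_matrix F lab \<phi> f z y * label_matrix F lab \<psi> g y w =
        (if y = z \<and> w = z then \<phi> (lab z) * \<psi> (lab z) else 0)
      + (if y = z \<and> w \<in> F then \<phi> (lab z) * g (lab z) (lab w) else 0)
      + (if y = w then f (lab z) (lab w) * \<psi> (lab w) else 0)
      + (if w \<in> F then f (lab z) (lab y) * g (lab y) (lab w) else 0)" if "y \<in> F" for y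
      using True that by (auto simp: label_matrix_def algebra_simps)
    have "mmult F (label_matrix F lab \<phi> f) (label_matrix F lab \<psi> g) z w =
        (\<Sum>y\<in>F. if y = z \<and> w = z then \<phi> (lab z) * \<psi> (lab z) else 0)
      + (\<Sum>y\<in>F. if y = z \<and> w \<in> F then \<phi> (lab z) * g (lab z) (lab w) else 0)
      + (\<Sum>y\<in>F. if y = w then f (lab z) (lab w) * \<psi> (lab w) else 0)
      + (\<Sum>y\<in>F. if w \<in> F then f (lab z) (lab y) * g (lab y) (lab w) else 0)"
      unfolding mmult_def by (simp add: entry sum.distrib)
    also have "\<dots> = label_matrix F lab (\<lambda>c. \<phi> c * \<psi> c)
      (\<lambda>c e. \<phi> c * g c e + f c e * \<psi> e + (\<Sum>y\<in>F. f c (lab y) * g (lab y) e)) z w"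
      using True assms by (auto simp: label_matrix_def sum.delta sum.delta' sum.If_cases)
    finally show ?thesis .
  qed
qed

lemma label_matrix_add:
  "label_matrix F lab \<phi> f + label_matrix F lab \<psi> g =
    label_matrix F lab (\<lambda>c. \<phi> c + \<psi> c) (\<lambda>c e. f c e + g c e)"
  by (auto simp: label_matrix_def fun_eq_iff)

lemma label_matrix_diff:
  "label_matrix F lab \<phi> f - label_matrix F lab \<psi> g =
    label_matrix F lab (\<lambda>c. \<phi> c - \<psi> c) (\<lambda>c e. f c e - g c e)"
  by (auto simp: label_matrix_def fun_eq_iff)

lemma rscale_label_matrix:
  "rscale r (label_matrix F lab \<phi> f) =
    label_matrix F lab (\<lambda>c. of_real r * \<phi> c) (\<lambda>c e. of_real r * f c e)"
  by (auto simp: label_matrix_def rscale_def fun_eq_iff algebra_simps)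

definition label_algebra :: "nat set set \<Rightarrow> (nat set \<Rightarrow> 'l) \<Rightarrow> ('l \<Rightarrow> complex) \<Rightarrow> cmat set" where
  "label_algebra F lab d = {label_matrix F lab (\<lambda>c. a * d c) f | a f. True}"

lemma commutator_label_algebra:
  assumes "finite F" "A \<in> label_algebra F lab d" "B \<in> label_algebra F lab d"
  shows "commutator F A B \<in> label_algebra F lab d"
proof -
  obtain a f where A: "A = label_matrix F lab (\<lambda>c. a * d c) f"
    using assms(2) by (auto simp: label_algebra_def)
  obtain b g where B: "B = label_matrix F lab (\<lambda>c. b * d c) g"
    using assms(3) by (auto simp: label_algebra_def)
  have diagonals_commute: "(\<lambda>c. a * d c * (b * d c) - b * d c * (a * d c)) = (\<lambda>c. 0 * d c)"
    by (simp add: fun_eq_iff)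
  show ?thesis
    unfolding A B commutator_def mmult_label_matrix[OF assms(1)] label_matrix_diff
      diagonals_commute label_algebra_def by blast
qed

lemma lie_closure_subset_label_algebra:
  assumes "finite F" "G \<subseteq> label_algebra F lab d"
  shows "lie_closure F G \<subseteq> label_algebra F lab d"
proof
  fix X
  assume "X \<in> lie_closure F G"
  then show "X \<in> label_algebra F lab d"
  proof induction
    case (gen A)
    then show ?case using assms(2) by blast
  next
    case zero
    have "(0::cmat) = label_matrix F lab (\<lambda>c. 0 * d c) (\<lambda>_ _. 0)"
      by (simp add: label_matrix_def fun_eq_iff)
    then show ?case unfolding label_algebra_def by blast
  next
    case (add A B)
    then obtain a f b g where "A = label_matrix F lab (\<lambda>c. a * d c) f"
      and "B = label_matrix F lab (\<lambda>c. b * d c) g"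
      by (auto simp: label_algebra_def)
    then have "A + B = label_matrix F lab (\<lambda>c. (a + b) * d c) (\<lambda>c e. f c e + g c e)"
      by (simp add: label_matrix_add algebra_simps)
    then show ?case unfolding label_algebra_def by blast
  next
    case (scale A r)
    then obtain a f where "A = label_matrix F lab (\<lambda>c. a * d c) f"
      by (auto simp: label_algebra_def)
    then have "rscale r A = label_matrix F lab (\<lambda>c. (of_real r * a) * d c) (\<lambda>c e. of_real r * f c e)"
      by (simp add: rscale_label_matrix algebra_simps)
    then show ?case unfolding label_algebra_def by blast
  next
    case (comm A B)
    then show ?case using commutator_label_algebra assms(1) by blast
  qed
qed

definition i_times :: "cmat \<Rightarrow> cmat" where
  "i_times A = (\<lambda>z w. \<i> * A z w)"

lemma complex_multiple_in_rspan:
  assumes "A \<in> S"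
  shows "(\<lambda>z w. c * A z w) \<in> rspace.span (S \<union> i_times ` S)"
proof -
  have "(\<lambda>z w. c * A z w) = rscale (Re c) A + rscale (Im c) (i_times A)"
    by (simp add: rscale_def i_times_def fun_eq_iff algebra_simps complex_eq_iff)
  then show ?thesis
    using assms by (simp add: rspace.span_add rspace.span_scale rspace.span_base)
qed

definition label_block :: "nat set set \<Rightarrow> (nat set \<Rightarrow> 'l) \<Rightarrow> 'l \<times> 'l \<Rightarrow> cmat" where
  "label_block F lab p = label_matrix F lab (\<lambda>_. 0) (\<lambda>c e. if (c, e) = p then 1 else 0)"

lemma label_matrix_expansion:
  assumes "lab ` F \<subseteq> L" "finite L"
  shows "label_matrix F lab (\<lambda>c. a * d c) f =
    (\<lambda>z w. a * label_matrix F lab d (\<lambda>_ _. 0) z w)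
      + (\<Sum>p\<in>L \<times> L. (\<lambda>z w. f (fst p) (snd p) * label_block F lab p z w))"
proof (intro ext)
  fix z w
  have "(\<Sum>p\<in>L \<times> L. f (fst p) (snd p) * label_block F lab p z w) =
      (\<Sum>p\<in>L \<times> L. if p = (lab z, lab w) then
         (if z \<in> F \<and> w \<in> F then f (lab z) (lab w) else 0) else 0)"
    by (intro sum.cong) (auto simp: label_block_def label_matrix_def)
  then show "label_matrix F lab (\<lambda>c. a * d c) f z w =
    ((\<lambda>z w. a * label_matrix F lab d (\<lambda>_ _. 0) z w)
      + (\<Sum>p\<in>L \<times> L. (\<lambda>z w. f (fst p) (snd p) * label_block F lab p z w))) z w"
    using assms by (auto simp: sum_cmat_apply label_matrix_def)
qed

definition label_spanning_set ::
  "nat set set \<Rightarrow> (nat set \<Rightarrow> 'l) \<Rightarrow> ('l \<Rightarrow> complex) \<Rightarrow> 'l set \<Rightarrow> cmat set" where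
  "label_spanning_set F lab d L =
    insert (label_matrix F lab d (\<lambda>_ _. 0)) (label_block F lab ` (L \<times> L))"

lemma label_algebra_subset_rspan:
  fixes d :: "'l \<Rightarrow> complex"
  assumes "lab ` F \<subseteq> L" "finite L"
  defines "S \<equiv> label_spanning_set F lab d L"
  shows "label_algebra F lab d \<subseteq> rspace.span (S \<union> i_times ` S)"
proof
  fix X
  assume "X \<in> label_algebra F lab d"
  then obtain a f where X: "X = label_matrix F lab (\<lambda>c. a * d c) f"
    by (auto simp: label_algebra_def)
  show "X \<in> rspace.span (S \<union> i_times ` S)"
    unfolding X label_matrix_expansion[OF assms(1,2)]
    by (intro rspace.span_add rspace.span_sum complex_multiple_in_rspan)
      (auto simp: S_def label_spanning_set_def)
qed

lemma real_dim_lie_closure_le: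
  assumes "finite F" "lab ` F \<subseteq> L" "finite L" "G \<subseteq> label_algebra F lab d"
  shows "real_dim (lie_closure F G) \<le> 2 * (card L ^ 2 + 1)"
proof -
  define S where "S = label_spanning_set F lab d L"
  have "finite S" "card S \<le> card L ^ 2 + 1"
    using assms(3) card_image_le[of "L \<times> L" "label_block F lab"]
    by (auto simp: S_def label_spanning_set_def card_insert_if card_cartesian_product power2_eq_square)
  have "lie_closure F G \<subseteq> rspace.span (S \<union> i_times ` S)"
    using lie_closure_subset_label_algebra[OF assms(1,4)] label_algebra_subset_rspan[OF assms(2,3)]
    unfolding S_def by blast
  then have "real_dim (lie_closure F G) \<le> card (S \<union> i_times ` S)"
    unfolding real_dim_def using \<open>finite S\<close> by (simp add: rspace.dim_le_card)
  also have "\<dots> \<le> 2 * card S"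
    using card_Un_le[of S "i_times ` S"]
      card_image_le[OF \<open>finite S\<close>, of i_times] by linarith
  also have "\<dots> \<le> 2 * (card L ^ 2 + 1)"
    using \<open>card S \<le> card L ^ 2 + 1\<close> by simp
  finally show ?thesis .
qed

lemma kds_cost_le:
  assumes "simple_graph n E"
  shows "kds_cost E z \<le> n ^ 2"
proof -
  have "{e\<in>E. e \<subseteq> z} \<subseteq> {B. B \<subseteq> {1..n} \<and> card B = 2}"
    using assms by (auto simp: simple_graph_def)
  then have "card {e\<in>E. e \<subseteq> z} \<le> card {B. B \<subseteq> {1..n} \<and> card B = 2}"
    by (intro card_mono) auto
  also have "\<dots> = n choose 2"
    using n_subsets[of "{1..n}" 2] by simp
  also have "\<dots> \<le> n ^ 2"
    unfolding choose_two power2_eq_square by (meson diff_le_self div_le_dividend le_trans mult_le_mono2)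
  finally show ?thesis unfolding kds_cost_def .
qed

lemma qwoa_generators_in_label_algebra:
  "{(\<lambda>z w. \<i> * H_C n k E z w), (\<lambda>z w. \<i> * H_M n k z w)}
     \<subseteq> label_algebra (feasible n k) (kds_cost E) of_nat"
proof -
  have "(\<lambda>z w. \<i> * H_C n k E z w) = label_matrix (feasible n k) (kds_cost E) (\<lambda>c. \<i> * of_nat c) (\<lambda>_ _. 0)"
    by (auto simp: fun_eq_iff H_C_def label_matrix_def)
  moreover have "(\<lambda>z w. \<i> * H_M n k z w) = label_matrix (feasible n k) (kds_cost E) (\<lambda>c. 0 * of_nat c) (\<lambda>_ _. \<i>)"
    by (auto simp: fun_eq_iff H_M_def label_matrix_def)
  ultimately show ?thesis unfolding label_algebra_def by blast
qed

lemma real_dim_qwoa_dla_le: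
  assumes "simple_graph n E"
  shows "real_dim (qwoa_dla n k E) \<le> 2 * ((n ^ 2 + 1) ^ 2 + 1)"
proof -
  have "finite (feasible n k)"
    unfolding feasible_def by (rule finite_subset[of _ "Pow {1..n}"]) auto
  moreover have "kds_cost E ` feasible n k \<subseteq> {..n ^ 2}"
    using kds_cost_le[OF assms] by auto
  ultimately have "real_dim (qwoa_dla n k E) \<le> 2 * (card {..n ^ 2} ^ 2 + 1)"
    unfolding qwoa_dla_def
    by (rule real_dim_lie_closure_le[OF _ _ _ qwoa_generators_in_label_algebra]) simp_all
  then show ?thesis by simp
qed

theorem corollary4:
  "\<exists>c::real. \<forall>(n::nat) (k::nat) (E::nat set set).
     1 < k \<longrightarrow> k < n \<longrightarrow> simple_graph n E \<longrightarrow>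
     real (real_dim (qwoa_dla n k E)) \<le> c * real n ^ 4"
proof (intro exI[of _ 10] allI impI)
  fix n k :: nat and E
  assume "1 < k" "k < n" "simple_graph n E"
  then have "1 \<le> real n" by simp
  have "real (real_dim (qwoa_dla n k E)) \<le> real (2 * ((n ^ 2 + 1) ^ 2 + 1))"
    using real_dim_qwoa_dla_le[OF \<open>simple_graph n E\<close>] by (simp only: of_nat_le_iff)
  also have "\<dots> = 2 * real n ^ 4 + 4 * real n ^ 2 + 4"
    by (simp add: power2_eq_square power4_eq_xxxx algebra_simps)
  also have "\<dots> \<le> 10 * real n ^ 4"
  proof -
    have "real n ^ 2 \<le> real n ^ 4" "1 \<le> real n ^ 4"
      using \<open>1 \<le> real n\<close> by (simp_all add: power_increasing)
    then show ?thesis by linarith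
  qed
  finally show "real (real_dim (qwoa_dla n k E)) \<le> 10 * real n ^ 4" .
qed

end
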